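(* There exists an absolute constant $C$ such that the following holds. Let $W$ be a non-negative integer-valued random variable with $EW=\lambda\in(0,\infty)$, let $Y\sim\mathrm{Poi}(\lambda)$, and for integers $k\ge0$ let $$\eta_k=\sup\Big\{\frac{P(W\ge r)}{P(Y\ge r)}: r \text{ integer},\ \lambda\le r\le k\Big\}$$ (with the supremum of the empty set equal to $0$). Then for every non-negative, non-decreasing function $g:\{0,1,2,\dots\}\to\mathbb R$ and every integer $k\ge0$, $$E\,g(W\wedge k)\le C(\eta_k+1)\,E\,g(Y\wedge k).$$
   Context: $a\wedge b=\min(a,b)$; $\mathrm{Poi}(\lambda)$ is the Poisson distribution with mean $\lambda$. *)

theory Defs
  imports "HOL-Probability.Probability"
begin

definition tail_eta :: "nat pmf \<Rightarrow> real \<Rightarrow> nat \<Rightarrow> real" where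
  "tail_eta p lam k =
     (let R = {r::nat. lam \<le> real r \<and> r \<le> k} in
      if R = {} then 0
      else Max ((\<lambda>r. measure_pmf.prob p {w. r \<le> w}
                     / measure_pmf.prob (poisson_pmf lam) {y. r \<le> y}) ` R))"

end

theory Submission imports Defs begin

text \<open>
  Fix W ~ p, Y ~ Poi(lam), a non-negative non-decreasing g and
  k, and put b = min k (\<lceil>lam\<rceil> - 1), so that b \<le> lam, b \<le> k, and every r with
  b < r \<le> k satisfies lam \<le> r.  Telescoping
    g(min w k) = g(min w b) + \<Sum>_{b<r\<le>k} (g r - g(r-1)) 1[r \<le> w]
  and taking expectations splits E g(min X k), for any law of X, into a head
  E g(min X b) and a tail sum of increments times tail probabilities P(X \<ge> r).
  For W the head is at most g b, and g b \<le> 2 E g(min Y k) because a Poisson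
  variable exceeds any level n \<le> lam with probability at least 1/2.  Each tail
  probability of W is at most eta_k times that of Y by definition of eta_k,
  and the tail sum for Y is at most E g(min Y k).
\<close>

lemma integrable_truncated:
  fixes g :: "nat \<Rightarrow> real"
  shows "integrable (measure_pmf q) (\<lambda>w. g (min w k))"
proof (rule measure_pmf.integrable_const_bound[where B = "\<Sum>i\<le>k. \<bar>g i\<bar>"])
  show "AE w in measure_pmf q. norm (g (min w k)) \<le> (\<Sum>i\<le>k. \<bar>g i\<bar>)"
    by (intro AE_I2) (auto intro: member_le_sum[where f = "\<lambda>i. \<bar>g i\<bar>"])
qed simp

lemma truncation_telescope:
  fixes g :: "nat \<Rightarrow> real"
  assumes "b \<le> k"
  shows "g (min w k) = g (min w b) + (\<Sum>r\<in>{b<..k}. (g r - g (r - 1)) * indicator {w. r \<le> w} w)"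
  using assms
proof (induction k rule: dec_induct)
  case base
  then show ?case by simp
next
  case (step k)
  have extend: "{b<..Suc k} = insert (Suc k) {b<..k}"
    using step by auto
  have sum_Suc: "(\<Sum>r\<in>{b<..Suc k}. (g r - g (r - 1)) * indicator {w. r \<le> w} w) =
      (g (Suc k) - g k) * indicator {w. Suc k \<le> w} w
      + (\<Sum>r\<in>{b<..k}. (g r - g (r - 1)) * indicator {w. r \<le> w} w)"
    unfolding extend by (subst sum.insert) auto
  show ?case
  proof (cases "w \<le> k")
    case True
    then show ?thesis
      using step.IH sum_Suc by (simp add: min_def)
  next
    case False
    then have "min w (Suc k) = Suc k" "min w k = k"
      by auto
    then show ?thesis
      using step.IH sum_Suc False by (simp add: indicator_def)
  qed
qed

lemma expectation_truncated_split:
  fixes g :: "nat \<Rightarrow> real"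
  assumes "b \<le> k"
  shows "measure_pmf.expectation q (\<lambda>w. g (min w k)) =
     measure_pmf.expectation q (\<lambda>w. g (min w b)) +
     (\<Sum>r\<in>{b<..k}. (g r - g (r - 1)) * measure_pmf.prob q {w. r \<le> w})"
proof -
  have step_integrable:
    "integrable (measure_pmf q) (\<lambda>w. (g r - g (r - 1)) * indicator {w. r \<le> w} w)" for r
    by (intro integrable_mult_right measure_pmf.integrable_const_bound[where B = 1])
       (auto simp: indicator_def)
  have "measure_pmf.expectation q (\<lambda>w. g (min w k)) =
      measure_pmf.expectation q (\<lambda>w. g (min w b)) +
      measure_pmf.expectation q
        (\<lambda>w. \<Sum>r\<in>{b<..k}. (g r - g (r - 1)) * indicator {w. r \<le> w} w)"
    unfolding truncation_telescope[OF assms, of g]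
    by (intro Bochner_Integration.integral_add integrable_truncated
        Bochner_Integration.integrable_sum step_integrable)
  also have "measure_pmf.expectation q
      (\<lambda>w. \<Sum>r\<in>{b<..k}. (g r - g (r - 1)) * indicator {w. r \<le> w} w) =
      (\<Sum>r\<in>{b<..k}. (g r - g (r - 1)) * measure_pmf.prob q {w. r \<le> w})"
    by (subst Bochner_Integration.integral_sum) (use step_integrable in auto)
  finally show ?thesis .
qed

text \<open>For non-negative g the head is non-negative, so the tail sum is bounded by the
  full truncated expectation.\<close>
lemma tail_sum_le_expectation:
  fixes g :: "nat \<Rightarrow> real"
  assumes "\<And>n. 0 \<le> g n" "b \<le> k"
  shows "(\<Sum>r\<in>{b<..k}. (g r - g (r - 1)) * measure_pmf.prob q {w. r \<le> w})
         \<le> measure_pmf.expectation q (\<lambda>w. g (min w k))"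
  using expectation_truncated_split[OF assms(2), of q g] assms(1)
  by (simp add: Bochner_Integration.integral_nonneg)

text \<open>Below the mean, Poisson weights grow away from the level n: the weight at n-1-j
  is at most the weight at n+j.  The step uses (n-1-j)(n+j+1) \<le> n^2 \<le> lam^2.\<close>
lemma poisson_weight_reflection:
  fixes lam :: real
  assumes "0 < lam" "real n \<le> lam" "j < n"
  shows "lam ^ (n - Suc j) / fact (n - Suc j) \<le> lam ^ (n + j) / fact (n + j)"
  using assms(3)
proof (induction j)
  case 0
  then obtain m where n: "n = Suc m"
    by (cases n) auto
  have "lam ^ m / fact m = lam ^ Suc m / fact (Suc m) * (real (Suc m) / lam)"
    using assms by (simp add: fact_Suc field_simps del: of_nat_Suc)
  also have "\<dots> \<le> lam ^ Suc m / fact (Suc m) * 1"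
    using assms n by (intro mult_left_mono) (auto simp: field_simps)
  finally show ?case
    using n by simp
next
  case (Suc j)
  define i where "i = n - Suc (Suc j)"
  have n_eq: "n = i + j + 2" and n_minus: "n - Suc j = Suc i"
    using Suc.prems unfolding i_def by auto
  have IH: "lam ^ Suc i / fact (Suc i) \<le> lam ^ (n + j) / fact (n + j)"
    using Suc n_minus by simp
  have product: "real (Suc i) * real (n + j + 1) \<le> lam * lam"
  proof -
    have "real (Suc i) * real (n + j + 1) = (real n - real (Suc j)) * (real n + real (Suc j))"
      unfolding n_eq by (simp add: algebra_simps)
    also have "\<dots> \<le> real n * real n"
      by (simp add: algebra_simps)
    also have "\<dots> \<le> lam * lam"
      using assms by (intro mult_mono) auto
    finally show ?thesis .
  qed
  have "lam ^ i / fact i = lam ^ Suc i / fact (Suc i) * (real (Suc i) / lam)"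
    using assms by (simp add: fact_Suc field_simps del: of_nat_Suc)
  also have "\<dots> \<le> lam ^ (n + j) / fact (n + j) * (real (Suc i) / lam)"
    using IH assms by (intro mult_right_mono) auto
  also have "\<dots> \<le> lam ^ (n + j) / fact (n + j) * (lam / real (n + j + 1))"
    using product assms by (intro mult_left_mono) (auto simp: field_simps)
  also have "\<dots> = lam ^ (n + Suc j) / fact (n + Suc j)"
    using assms by (simp add: fact_Suc field_simps del: of_nat_Suc)
  finally show ?case
    unfolding i_def by simp
qed

text \<open>Reflecting {0..n-1} onto {n..2n-1} shows P(Y < n) \<le> P(Y \<ge> n), i.e. P(Y \<ge> n) \<ge> 1/2.\<close>
lemma poisson_tail_ge_half:
  fixes lam :: real
  assumes "0 < lam" "real n \<le> lam"
  shows "measure_pmf.prob (poisson_pmf lam) {y. n \<le> y} \<ge> 1/2"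
proof -
  let ?Y = "poisson_pmf lam"
  have "measure_pmf.prob ?Y {..<n} = (\<Sum>j<n. pmf ?Y (n - Suc j))"
    by (simp add: measure_measure_pmf_finite sum.nat_diff_reindex)
  also have "\<dots> \<le> (\<Sum>j<n. pmf ?Y (n + j))"
  proof (intro sum_mono)
    fix j assume "j \<in> {..<n}"
    then have "lam ^ (n - Suc j) / fact (n - Suc j) * exp (-lam)
        \<le> lam ^ (n + j) / fact (n + j) * exp (-lam)"
      using poisson_weight_reflection[OF assms] by (intro mult_right_mono) auto
    then show "pmf ?Y (n - Suc j) \<le> pmf ?Y (n + j)"
      using assms by simp
  qed
  also have "\<dots> = measure_pmf.prob ?Y ((\<lambda>j. n + j) ` {..<n})"
    by (simp add: measure_measure_pmf_finite sum.reindex)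
  also have "\<dots> \<le> measure_pmf.prob ?Y {y. n \<le> y}"
    by (intro measure_pmf.finite_measure_mono) auto
  finally have lower_le_upper: "measure_pmf.prob ?Y {..<n} \<le> measure_pmf.prob ?Y {y. n \<le> y}" .
  have "{y. n \<le> y} = UNIV - {..<n}"
    by auto
  then have "measure_pmf.prob ?Y {..<n} + measure_pmf.prob ?Y {y. n \<le> y} = 1"
    using measure_pmf.prob_compl[of "{..<n}" ?Y] by simp
  with lower_le_upper show ?thesis
    by linarith
qed

lemma value_le_twice_poisson_expectation:
  fixes g :: "nat \<Rightarrow> real"
  assumes "\<And>n. 0 \<le> g n" "mono g" "0 < lam" "real b \<le> lam" "b \<le> k"
  shows "g b \<le> 2 * measure_pmf.expectation (poisson_pmf lam) (\<lambda>y. g (min y k))"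
proof -
  let ?Y = "poisson_pmf lam"
  have "g b * (1/2) \<le> g b * measure_pmf.prob ?Y {y. b \<le> y}"
    using poisson_tail_ge_half[OF assms(3,4)] assms(1) by (intro mult_left_mono) auto
  also have "\<dots> = measure_pmf.expectation ?Y (\<lambda>y. g b * indicator {y. b \<le> y} y)"
    by simp
  also have "\<dots> \<le> measure_pmf.expectation ?Y (\<lambda>y. g (min y k))"
  proof (intro Bochner_Integration.integral_mono integrable_truncated)
    show "integrable (measure_pmf ?Y) (\<lambda>y. g b * indicator {y. b \<le> y} y)"
      by (intro integrable_mult_right measure_pmf.integrable_const_bound[where B = 1])
         (auto simp: indicator_def)
    show "g b * indicator {y. b \<le> y} y \<le> g (min y k)" for y
      using assms(1,5) by (auto simp: indicator_def intro: monoD[OF assms(2)])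
  qed
  finally show ?thesis
    by simp
qed

text \<open>Poisson tails are positive, so the ratios defining eta_k are honest quotients.\<close>
lemma poisson_tail_pos:
  assumes "0 < lam"
  shows "0 < measure_pmf.prob (poisson_pmf lam) {y. r \<le> y}"
proof -
  have "0 < pmf (poisson_pmf lam) r"
    using assms by simp
  also have "\<dots> \<le> measure_pmf.prob (poisson_pmf lam) {y. r \<le> y}"
    by (simp add: pmf.rep_eq measure_pmf.finite_measure_mono)
  finally show ?thesis .
qed

lemma tail_eta_nonneg: "0 \<le> tail_eta p lam k"
proof (cases "{r::nat. lam \<le> real r \<and> r \<le> k} = {}")
  case True
  then show ?thesis
    unfolding tail_eta_def by (simp add: Let_def)
next
  case False
  then obtain r where r: "lam \<le> real r" "r \<le> k"
    by auto
  have "finite {r::nat. lam \<le> real r \<and> r \<le> k}"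
    by (rule finite_subset[of _ "{..k}"]) auto
  then have "measure_pmf.prob p {w. r \<le> w} / measure_pmf.prob (poisson_pmf lam) {y. r \<le> y}
      \<le> tail_eta p lam k"
    using r unfolding tail_eta_def by (auto simp: Let_def)
  then show ?thesis
    by (rule order_trans[rotated]) simp
qed

lemma tail_le_tail_eta:
  assumes "0 < lam" "lam \<le> real r" "r \<le> k"
  shows "measure_pmf.prob p {w. r \<le> w}
         \<le> tail_eta p lam k * measure_pmf.prob (poisson_pmf lam) {y. r \<le> y}"
proof -
  define R where "R = {r::nat. lam \<le> real r \<and> r \<le> k}"
  have "finite R"
    unfolding R_def by (rule finite_subset[of _ "{..k}"]) auto
  moreover have "r \<in> R"
    using assms unfolding R_def by simp
  ultimately have "measure_pmf.prob p {w. r \<le> w} / measure_pmf.prob (poisson_pmf lam) {y. r \<le> y}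
      \<le> tail_eta p lam k"
    unfolding tail_eta_def R_def[symmetric] by (auto simp: Let_def)
  then show ?thesis
    using poisson_tail_pos[OF assms(1), of r] by (simp add: divide_le_eq)
qed

text \<open>The splitting level b = min k (\<lceil>lam\<rceil> - 1): it lies below both lam and k, and every
  level strictly between b and k is admissible in the definition of eta_k.\<close>
lemma splitting_level:
  fixes lam :: real
  assumes "0 < lam"
  obtains b :: nat where "real b \<le> lam" "b \<le> k" "\<And>r. b < r \<Longrightarrow> r \<le> k \<Longrightarrow> lam \<le> real r"
proof
  let ?a = "nat \<lceil>lam\<rceil>"
  show "real (min k (?a - 1)) \<le> lam" and "min k (?a - 1) \<le> k"
    using assms by linarith+
  show "lam \<le> real r" if "min k (?a - 1) < r" "r \<le> k" for r
    using that assms by linarith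
qed

text \<open>Above the splitting level all levels are admissible, so the tail sum for p is at
  most eta_k times the tail sum for Poi(lam), which is at most E g(min Y k).\<close>
lemma tail_sum_comparison:
  fixes g :: "nat \<Rightarrow> real"
  assumes g_nonneg: "\<And>n. 0 \<le> g n" and g_mono: "mono g" and lam: "0 < lam"
    and admissible: "\<And>r. b < r \<Longrightarrow> r \<le> k \<Longrightarrow> lam \<le> real r" and b_k: "b \<le> k"
  shows "(\<Sum>r\<in>{b<..k}. (g r - g (r - 1)) * measure_pmf.prob p {w. r \<le> w})
         \<le> tail_eta p lam k * measure_pmf.expectation (poisson_pmf lam) (\<lambda>y. g (min y k))"
proof -
  let ?Y = "poisson_pmf lam"
  let ?eta = "tail_eta p lam k"
  have increment_nonneg: "0 \<le> g r - g (r - 1)" for r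
    using monoD[OF g_mono, of "r - 1" r] by simp
  have "(\<Sum>r\<in>{b<..k}. (g r - g (r - 1)) * measure_pmf.prob p {w. r \<le> w})
      \<le> ?eta * (\<Sum>r\<in>{b<..k}. (g r - g (r - 1)) * measure_pmf.prob ?Y {y. r \<le> y})"
    unfolding sum_distrib_left
  proof (intro sum_mono)
    fix r assume "r \<in> {b<..k}"
    then have "measure_pmf.prob p {w. r \<le> w} \<le> ?eta * measure_pmf.prob ?Y {y. r \<le> y}"
      using tail_le_tail_eta[OF lam admissible] by auto
    from mult_left_mono[OF this increment_nonneg]
    show "(g r - g (r - 1)) * measure_pmf.prob p {w. r \<le> w}
        \<le> ?eta * ((g r - g (r - 1)) * measure_pmf.prob ?Y {y. r \<le> y})"
      by (simp add: mult.left_commute)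
  qed
  also have "\<dots> \<le> ?eta * measure_pmf.expectation ?Y (\<lambda>y. g (min y k))"
    by (intro mult_left_mono tail_sum_le_expectation g_nonneg b_k tail_eta_nonneg)
  finally show ?thesis .
qed

lemma truncated_expectation_comparison:
  fixes g :: "nat \<Rightarrow> real"
  assumes g_nonneg: "\<And>n. 0 \<le> g n" and g_mono: "mono g" and lam: "0 < lam"
  shows "measure_pmf.expectation p (\<lambda>w. g (min w k))
         \<le> 2 * (tail_eta p lam k + 1)
             * measure_pmf.expectation (poisson_pmf lam) (\<lambda>y. g (min y k))"
proof -
  let ?Y = "poisson_pmf lam"
  let ?eta = "tail_eta p lam k"
  let ?E = "measure_pmf.expectation ?Y (\<lambda>y. g (min y k))"
  obtain b where b_lam: "real b \<le> lam" and b_k: "b \<le> k"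
    and admissible: "\<And>r. b < r \<Longrightarrow> r \<le> k \<Longrightarrow> lam \<le> real r"
    using splitting_level[OF lam] by blast
  have "measure_pmf.expectation p (\<lambda>w. g (min w b)) \<le> measure_pmf.expectation p (\<lambda>_. g b)"
    by (intro Bochner_Integration.integral_mono integrable_truncated)
       (auto intro: monoD[OF g_mono])
  then have head: "measure_pmf.expectation p (\<lambda>w. g (min w b)) \<le> g b"
    by simp
  have tail: "(\<Sum>r\<in>{b<..k}. (g r - g (r - 1)) * measure_pmf.prob p {w. r \<le> w}) \<le> ?eta * ?E"
    by (rule tail_sum_comparison[OF g_nonneg g_mono lam admissible b_k])
  have "measure_pmf.expectation p (\<lambda>w. g (min w k)) \<le> g b + ?eta * ?E"
    using head tail expectation_truncated_split[OF b_k, of p g] by linarith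
  also have "\<dots> \<le> 2 * ?E + ?eta * ?E"
    using value_le_twice_poisson_expectation[OF g_nonneg g_mono lam b_lam b_k] by linarith
  also have "\<dots> \<le> 2 * (?eta + 1) * ?E"
    using tail_eta_nonneg[of p lam k] Bochner_Integration.integral_nonneg[of ?Y "\<lambda>y. g (min y k)"]
      g_nonneg
    by (simp add: algebra_simps)
  finally show ?thesis .
qed

theorem lemma4p4:
  shows "\<exists>C::real. \<forall>(p::nat pmf) (lam::real) (g::nat \<Rightarrow> real) (k::nat).
     0 < lam \<and> integrable (measure_pmf p) real
     \<and> measure_pmf.expectation p real = lam
     \<and> (\<forall>n. 0 \<le> g n) \<and> mono g
     \<longrightarrow> measure_pmf.expectation p (\<lambda>w. g (min w k))
         \<le> C * (tail_eta p lam k + 1)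
             * measure_pmf.expectation (poisson_pmf lam) (\<lambda>y. g (min y k))"
  by (intro exI[of _ 2] allI impI) (blast intro: truncated_expectation_comparison)

end
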